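(* In the linear deterministic diamond network with a disturbing node with gains $n_1,n_2,n_3,n_4,m$, suppose $n_1>n_2$, $n_3\ge n_4$ and $m\ge n_1$. Then the linear capacity is $C=\min(n_1,n_4)$.
   Context: The shift matrix $Q$ is the $q\times q$ matrix over $\mathbb{F}_2$ with $Q_{i+1,i}=1$ for $1\le i\le q-1$ and all other entries $0$, where $q=\max(n_1,n_2,n_3,n_4,m)$ and all gains are nonnegative integers. Network: source $S$, relays $A,B$, destination $D$, disturbing node $M$; gains $n_1$ ($S\to A$), $n_2$ ($S\to B$), $n_3$ ($A\to D$), $n_4$ ($B\to D$), $m$ ($M\to A$ and $M\to B$). Each node transmits $x_i\in\mathbb{F}_2^q$ and receives $y_j=\sum_{k:(k,j)\text{ an edge}}Q^{q-n_{(k,j)}}x_k$; relays use linear maps $x_A=G_Ay_A$, $x_B=G_By_B$ with $G_A,G_B$ arbitrary $q\times q$ matrices over $\mathbb{F}_2$. Then $y_D=G_Sx_S+G_Mx_M$ with $G_S=Q^{q-n_3}G_AQ^{q-n_1}+Q^{q-n_4}G_BQ^{q-n_2}$ and $G_M=Q^{q-n_3}G_AQ^{q-m}+Q^{q-n_4}G_BQ^{q-m}$. The rate $R(G_A,G_B)$ is the maximum dimension of a subspace $\mathcal{X}\subseteq\mathbb{F}_2^q$ such that for all $x_S,x_S'\in\mathcal{X}$, $x_M,x_M'\in\mathbb{F}_2^q$, $G_Sx_S+G_Mx_M=G_Sx_S'+G_Mx_M'$ implies $x_S=x_S'$. The linear capacity is $C=\max_{G_A,G_B}R(G_A,G_B)$.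 *)

theory Defs
  imports "Jordan_Normal_Form.VS_Connect" "HOL-Library.Z2"
begin

text \<open>Linear deterministic diamond network with a disturbing node, over GF(2)
  (the type bit). Vectors are 0-indexed: entry i of the paper is entry i-1 here.\<close>

definition net_q :: "nat \<Rightarrow> nat \<Rightarrow> nat \<Rightarrow> nat \<Rightarrow> nat \<Rightarrow> nat" where
  "net_q n1 n2 n3 n4 m = Max {n1, n2, n3, n4, m}"

definition shiftQ :: "nat \<Rightarrow> bit mat" where
  "shiftQ q = mat q q (\<lambda>(i, j). if i = j + 1 then 1 else 0)"

definition QP :: "nat \<Rightarrow> nat \<Rightarrow> bit mat" where
  "QP q k = shiftQ q ^\<^sub>m k"

definition G_S :: "nat \<Rightarrow> nat \<Rightarrow> nat \<Rightarrow> nat \<Rightarrow> nat \<Rightarrow> bit mat \<Rightarrow> bit mat \<Rightarrow> bit mat" where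
  "G_S n1 n2 n3 n4 m GA GB = (let q = net_q n1 n2 n3 n4 m in
     QP q (q - n3) * GA * QP q (q - n1) + QP q (q - n4) * GB * QP q (q - n2))"

definition G_M :: "nat \<Rightarrow> nat \<Rightarrow> nat \<Rightarrow> nat \<Rightarrow> nat \<Rightarrow> bit mat \<Rightarrow> bit mat \<Rightarrow> bit mat" where
  "G_M n1 n2 n3 n4 m GA GB = (let q = net_q n1 n2 n3 n4 m in
     QP q (q - n3) * GA * QP q (q - m) + QP q (q - n4) * GB * QP q (q - m))"

definition good_subspace :: "nat \<Rightarrow> nat \<Rightarrow> nat \<Rightarrow> nat \<Rightarrow> nat \<Rightarrow> bit mat \<Rightarrow> bit mat \<Rightarrow> bit vec set \<Rightarrow> nat \<Rightarrow> bool" where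
  "good_subspace n1 n2 n3 n4 m GA GB X d = (let q = net_q n1 n2 n3 n4 m;
       V = module_vec TYPE(bit) q; GS = G_S n1 n2 n3 n4 m GA GB; GM = G_M n1 n2 n3 n4 m GA GB in
     subspace class_ring X V \<and>
     vectorspace.dim class_ring (V\<lparr>carrier := X\<rparr>) = d \<and>
     (\<forall>xs \<in> X. \<forall>xs' \<in> X. \<forall>xm \<in> carrier_vec q. \<forall>xm' \<in> carrier_vec q.
        GS *\<^sub>v xs + GM *\<^sub>v xm = GS *\<^sub>v xs' + GM *\<^sub>v xm' \<longrightarrow> xs = xs'))"

definition rate :: "nat \<Rightarrow> nat \<Rightarrow> nat \<Rightarrow> nat \<Rightarrow> nat \<Rightarrow> bit mat \<Rightarrow> bit mat \<Rightarrow> nat" where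
  "rate n1 n2 n3 n4 m GA GB = Max {d. \<exists>X. good_subspace n1 n2 n3 n4 m GA GB X d}"

definition linear_capacity :: "nat \<Rightarrow> nat \<Rightarrow> nat \<Rightarrow> nat \<Rightarrow> nat \<Rightarrow> nat" where
  "linear_capacity n1 n2 n3 n4 m = (let q = net_q n1 n2 n3 n4 m in
     Max {rate n1 n2 n3 n4 m GA GB | GA GB. GA \<in> carrier_mat q q \<and> GB \<in> carrier_mat q q})"

end

theory Submission
  imports Defs "Jordan_Normal_Form.DL_Rank"
begin

text \<open>The relays see only the top n1 levels of the source signal, so truncation to them is injective
  on a decodable subspace and the rate is at most n1. Since m \<ge> n1, the disturbing node can make
  both relays receive exactly what relay A would receive from any source signal (it sends
  Q^(m-n1) x); two source signals are then indistinguishable at D unless they differ in the top n4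
  levels of what relay B forwards, so the rate is at most n4. For achievability both relays shift
  their input up by q - n1 and relay A additionally delays by n3 - n4: the two relay signals reach D
  aligned, the disturbance arrives twice and cancels over GF(2), and level j of the source arrives
  as x_j + x_(j-(n1-n2)), a triangular system that determines the first min(n1,n4) levels.\<close>

section \<open>Linear algebra over a finite field\<close>

lemma index_indicator_mat_mult_vec:
  fixes v :: "'a :: semiring_1 vec"
  assumes "v \<in> carrier_vec n" and "i < k"
  shows "(mat k n (\<lambda>(i, j). if P i j then 1 else 0) *\<^sub>v v) $ i = (\<Sum>j \<in> {j. j < n \<and> P i j}. v $ j)"
proof -
  have "(mat k n (\<lambda>(i, j). if P i j then 1 else 0) *\<^sub>v v) $ i = (\<Sum>j<n. if P i j then v $ j else 0)"
    using assms by (simp add: scalar_prod_def atLeast0LessThan if_distrib[of "\<lambda>c. c * _"] cong: if_cong)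
  also have "\<dots> = (\<Sum>j \<in> {j. j < n \<and> P i j}. v $ j)"
    using sum.inter_filter[of "{..<n}" "\<lambda>j. v $ j" "P i"] by simp
  finally show ?thesis .
qed

lemma mult_mat_vec_assoc3:
  assumes "A \<in> carrier_mat n n" "B \<in> carrier_mat n n" "C \<in> carrier_mat n n" "x \<in> carrier_vec n"
  shows "(A * B * C) *\<^sub>v x = A *\<^sub>v (B *\<^sub>v (C *\<^sub>v x))"
  using assms by (simp add: assoc_mult_mat_vec[of _ n n _ n])

lemma add_mult_mat_vec_assoc3:
  assumes "A \<in> carrier_mat n n" "B \<in> carrier_mat n n" "C \<in> carrier_mat n n"
    and "D \<in> carrier_mat n n" "E \<in> carrier_mat n n" "F \<in> carrier_mat n n" and "x \<in> carrier_vec n"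
  shows "(A * B * C + D * E * F) *\<^sub>v x = A *\<^sub>v (B *\<^sub>v (C *\<^sub>v x)) + D *\<^sub>v (E *\<^sub>v (F *\<^sub>v x))"
proof -
  have "(A * B * C + D * E * F) *\<^sub>v x = (A * B * C) *\<^sub>v x + (D * E * F) *\<^sub>v x"
    using assms by (intro add_mult_distrib_mat_vec[of _ n n]) auto
  then show ?thesis by (simp only: mult_mat_vec_assoc3[OF assms(1-3,7)] mult_mat_vec_assoc3[OF assms(4-7)])
qed

lemma finite_carrier_vec:
  assumes "finite (UNIV :: 'a set)"
  shows "finite (carrier_vec n :: 'a vec set)"
proof -
  have "carrier_vec n \<subseteq> vec_of_list ` {xs :: 'a list. length xs = n}"
    by (auto intro!: image_eqI[of _ _ "list_of_vec v" for v] simp: vec_list)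
  then show ?thesis
    using finite_lists_length_eq[OF assms] by (auto intro: finite_subset)
qed

lemma finite_UNIV_bit: "finite (UNIV :: bit set)"
proof -
  have "UNIV = {0, 1 :: bit}" using bit.exhaust by auto
  then show ?thesis by (metis finite.emptyI finite_insert)
qed

lemma subspace_fin_dim:
  fixes X :: "'a :: field vec set"
  assumes "finite (UNIV :: 'a set)" and "subspace class_ring X (module_vec TYPE('a) n)"
  shows "vectorspace.fin_dim class_ring ((module_vec TYPE('a) n)\<lparr>carrier := X\<rparr>)"
proof -
  interpret V: vec_space "TYPE('a)" n .
  interpret X: vectorspace class_ring "V.vs X" by (rule V.subspace_is_vs[OF assms(2)])
  have "X \<subseteq> carrier_vec n" using assms(2) unfolding subspace_def submodule_def by auto
  then have "finite X" using finite_carrier_vec[OF assms(1)] by (rule finite_subset)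
  moreover have "X.span X = X" using X.span_is_subset2[of X] X.in_own_span[of X] by auto
  ultimately show ?thesis unfolding X.fin_dim_def by auto
qed

lemma mat_mult_vec_linear_map:
  fixes A :: "'a :: field mat"
  assumes "subspace class_ring X (module_vec TYPE('a) n)" and "A \<in> carrier_mat k n"
  shows "linear_map class_ring ((module_vec TYPE('a) n)\<lparr>carrier := X\<rparr>) (module_vec TYPE('a) k) ((*\<^sub>v) A)"
proof -
  interpret V: vec_space "TYPE('a)" n .
  interpret W: vec_space "TYPE('a)" k .
  interpret X: vectorspace class_ring "V.vs X" by (rule V.subspace_is_vs[OF assms(1)])
  have "x \<in> carrier_vec n" if "x \<in> X" for x
    using assms(1) that unfolding subspace_def submodule_def by auto
  then show ?thesis
    unfolding linear_map_def mod_hom_def mod_hom_axioms_def LinearCombinations.module_hom_def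
    using X.vectorspace_axioms W.vectorspace_axioms X.module_axioms W.module_axioms assms(2)
    by (auto simp: module_vec_simps mult_add_distrib_mat_vec[OF assms(2)] mult_mat_vec[OF assms(2)])
qed

lemma subspace_dim_le_of_inj_mat:
  fixes A :: "'a :: field mat"
  assumes "finite (UNIV :: 'a set)" and X: "subspace class_ring X (module_vec TYPE('a) n)"
    and "A \<in> carrier_mat k n" and inj: "inj_on ((*\<^sub>v) A) X"
  shows "vectorspace.dim class_ring ((module_vec TYPE('a) n)\<lparr>carrier := X\<rparr>) \<le> k"
proof -
  interpret V: vec_space "TYPE('a)" n .
  interpret W: vec_space "TYPE('a)" k .
  interpret X: vectorspace class_ring "V.vs X" by (rule V.subspace_is_vs[OF X])
  interpret A: linear_map class_ring "V.vs X" "module_vec TYPE('a) k" "(*\<^sub>v) A"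
    by (rule mat_mult_vec_linear_map[OF X assms(3)])
  have fin: "X.fin_dim" by (rule subspace_fin_dim[OF assms(1) X])
  have "vectorspace.dim class_ring (W.vs A.imT) + vectorspace.dim class_ring (X.vs A.kerT) = X.dim"
    by (rule A.rank_nullity[OF fin])
  moreover have "vectorspace.dim class_ring (X.vs A.kerT) = 0"
    using A.inj_imp_dim_ker0 inj by simp
  moreover have "vectorspace.dim class_ring (W.vs A.imT) \<le> W.dim"
    using W.subspace_dim[OF A.imT_is_subspace W.fin_dim subspace_fin_dim[OF assms(1) A.imT_is_subspace]] .
  ultimately show ?thesis using W.dim_is_n by simp
qed

lemma subspace_dim_eq_of_bij_mat:
  fixes A :: "'a :: field mat"
  assumes "finite (UNIV :: 'a set)" and X: "subspace class_ring X (module_vec TYPE('a) n)"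
    and "A \<in> carrier_mat k n" and inj: "inj_on ((*\<^sub>v) A) X" and surj: "(*\<^sub>v) A ` X = carrier_vec k"
  shows "vectorspace.dim class_ring ((module_vec TYPE('a) n)\<lparr>carrier := X\<rparr>) = k"
proof -
  interpret V: vec_space "TYPE('a)" n .
  interpret W: vec_space "TYPE('a)" k .
  interpret A: linear_map class_ring "V.vs X" "module_vec TYPE('a) k" "(*\<^sub>v) A"
    by (rule mat_mult_vec_linear_map[OF X assms(3)])
  show ?thesis
    using A.dim_eq[OF subspace_fin_dim[OF assms(1) X]] inj surj W.dim_is_n by (simp add: module_vec_simps)
qed

definition trunc_mat :: "nat \<Rightarrow> nat \<Rightarrow> 'a :: zero_neq_one mat" where
  "trunc_mat k n = mat k n (\<lambda>(i, j). if i = j then 1 else 0)"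

lemma trunc_mat_carrier [simp]: "trunc_mat k n \<in> carrier_mat k n"
  and dim_trunc_mat [simp]: "dim_row (trunc_mat k n) = k" "dim_col (trunc_mat k n) = n"
  unfolding trunc_mat_def by simp_all

lemma trunc_mat_mult_vec:
  fixes v :: "'a :: semiring_1 vec"
  assumes "v \<in> carrier_vec n" and "k \<le> n"
  shows "trunc_mat k n *\<^sub>v v = vec k (\<lambda>i. v $ i)"
proof (rule eq_vecI)
  fix i assume "i < dim_vec (vec k (\<lambda>i. v $ i))"
  then have "i < k" by simp
  moreover have "{j. j < n \<and> i = j} = {i}" using \<open>i < k\<close> assms(2) by auto
  ultimately show "(trunc_mat k n *\<^sub>v v) $ i = vec k (\<lambda>i. v $ i) $ i"
    unfolding trunc_mat_def using index_indicator_mat_mult_vec[OF assms(1)] by simp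
qed simp

lemma trunc_mat_mult_vec_eqD:
  fixes v w :: "'a :: semiring_1 vec"
  assumes "trunc_mat k n *\<^sub>v v = trunc_mat k n *\<^sub>v w" and "v \<in> carrier_vec n" "w \<in> carrier_vec n"
    and "i < k" and "k \<le> n"
  shows "v $ i = w $ i"
  using assms by (metis trunc_mat_mult_vec index_vec)

definition low_vecs :: "nat \<Rightarrow> nat \<Rightarrow> 'a :: zero vec set" where
  "low_vecs n k = {v \<in> carrier_vec n. \<forall>i<n. k \<le> i \<longrightarrow> v $ i = 0}"

lemma low_vecs_subspace: "subspace class_ring (low_vecs n k) (module_vec TYPE('a :: field) n)"
  using vec_vs[of n] unfolding subspace_def submodule_def low_vecs_def
  by (auto simp: module_vec_simps vectorspace_def)

lemma low_vecs_dim: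
  assumes "finite (UNIV :: 'a :: field set)" and "k \<le> n"
  shows "vectorspace.dim class_ring ((module_vec TYPE('a) n)\<lparr>carrier := low_vecs n k\<rparr>) = k"
proof (rule subspace_dim_eq_of_bij_mat[OF assms(1) low_vecs_subspace trunc_mat_carrier])
  have "v = w" if v: "v \<in> low_vecs n k" and w: "w \<in> low_vecs n k"
    and eq: "trunc_mat k n *\<^sub>v v = trunc_mat k n *\<^sub>v w" for v w :: "'a vec"
  proof -
    have "v $ i = w $ i" if "i < n" for i
      using trunc_mat_mult_vec_eqD[OF eq, of i] v w assms(2) that unfolding low_vecs_def
      by (cases "i < k") auto
    then show "v = w" using v w unfolding low_vecs_def by (auto intro: eq_vecI)
  qed
  then show "inj_on ((*\<^sub>v) (trunc_mat k n :: 'a mat)) (low_vecs n k)" by (rule inj_onI)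
  show "(*\<^sub>v) (trunc_mat k n :: 'a mat) ` low_vecs n k = carrier_vec k"
  proof (intro subset_antisym subsetI)
    fix w :: "'a vec" assume w: "w \<in> carrier_vec k"
    define v where "v = vec n (\<lambda>i. if i < k then w $ i else 0)"
    have "v \<in> low_vecs n k" unfolding v_def low_vecs_def by auto
    moreover have "trunc_mat k n *\<^sub>v v = w"
      using w assms(2) unfolding v_def by (subst trunc_mat_mult_vec) auto
    ultimately show "w \<in> (*\<^sub>v) (trunc_mat k n) ` low_vecs n k" by force
  qed (auto simp: low_vecs_def intro: mult_mat_vec_carrier[OF trunc_mat_carrier])
qed

section \<open>Shift matrices\<close>

lemma QP_carrier [simp]: "QP q s \<in> carrier_mat q q"
  and dim_QP [simp]: "dim_row (QP q s) = q" "dim_col (QP q s) = q"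
  unfolding QP_def shiftQ_def by simp_all

lemma shiftQ_mult_vec:
  assumes "v \<in> carrier_vec q"
  shows "shiftQ q *\<^sub>v v = vec q (\<lambda>i. if 1 \<le> i then v $ (i - 1) else 0)"
proof (rule eq_vecI)
  fix i assume "i < dim_vec (vec q (\<lambda>i. if 1 \<le> i then v $ (i - 1) else 0))"
  then have "i < q" by simp
  moreover have "{j. j < q \<and> i = j + 1} = (if 1 \<le> i then {i - 1} else {})" using \<open>i < q\<close> by auto
  ultimately show "(shiftQ q *\<^sub>v v) $ i = vec q (\<lambda>i. if 1 \<le> i then v $ (i - 1) else 0) $ i"
    unfolding shiftQ_def index_indicator_mat_mult_vec[OF assms \<open>i < q\<close>] by simp
qed (simp add: shiftQ_def)

lemma QP_mult_vec:
  assumes "v \<in> carrier_vec q"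
  shows "QP q s *\<^sub>v v = vec q (\<lambda>i. if s \<le> i then v $ (i - s) else 0)"
  using assms
proof (induction s arbitrary: v)
  case 0
  then show ?case unfolding QP_def shiftQ_def by (auto intro!: eq_vecI)
next
  case (Suc s)
  have "QP q (Suc s) *\<^sub>v v = QP q s *\<^sub>v (shiftQ q *\<^sub>v v)"
    unfolding QP_def using Suc.prems by (simp add: assoc_mult_mat_vec[of _ q q _ q] shiftQ_def)
  also have "\<dots> = vec q (\<lambda>i. if Suc s \<le> i then v $ (i - Suc s) else 0)"
    using Suc by (simp add: shiftQ_mult_vec) (auto intro!: eq_vecI)
  finally show ?case .
qed

lemma QP_mult_QP_vec:
  assumes "v \<in> carrier_vec q"
  shows "QP q a *\<^sub>v (QP q b *\<^sub>v v) = QP q (a + b) *\<^sub>v v"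
  using assms by (simp add: QP_mult_vec) (auto intro!: eq_vecI simp: diff_diff_left)

lemma QP_mult_vec_cong:
  assumes "v \<in> carrier_vec q" and "w \<in> carrier_vec q" and "\<And>i. i + s < q \<Longrightarrow> v $ i = w $ i"
  shows "QP q s *\<^sub>v v = QP q s *\<^sub>v w"
  using assms by (simp add: QP_mult_vec) (auto intro!: eq_vecI)

definition shift_up :: "nat \<Rightarrow> nat \<Rightarrow> bit mat" where
  "shift_up q s = mat q q (\<lambda>(i, j). if j = i + s then 1 else 0)"

lemma shift_up_carrier [simp]: "shift_up q s \<in> carrier_mat q q"
  unfolding shift_up_def by simp

lemma shift_up_mult_vec:
  assumes "v \<in> carrier_vec q"
  shows "shift_up q s *\<^sub>v v = vec q (\<lambda>i. if i + s < q then v $ (i + s) else 0)"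
proof (rule eq_vecI)
  fix i assume "i < dim_vec (vec q (\<lambda>i. if i + s < q then v $ (i + s) else 0))"
  then have "i < q" by simp
  moreover have "{j. j < q \<and> j = i + s} = (if i + s < q then {i + s} else {})" by auto
  ultimately show "(shift_up q s *\<^sub>v v) $ i = vec q (\<lambda>i. if i + s < q then v $ (i + s) else 0) $ i"
    unfolding shift_up_def index_indicator_mat_mult_vec[OF assms \<open>i < q\<close>] by simp
qed (simp add: shift_up_def)

lemma net_q_ge:
  "n1 \<le> net_q n1 n2 n3 n4 m" "n2 \<le> net_q n1 n2 n3 n4 m" "n3 \<le> net_q n1 n2 n3 n4 m"
  "n4 \<le> net_q n1 n2 n3 n4 m" "m \<le> net_q n1 n2 n3 n4 m"
  unfolding net_q_def by simp_all

lemma G_S_carrier: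
  assumes "q = net_q n1 n2 n3 n4 m" and "GA \<in> carrier_mat q q" and "GB \<in> carrier_mat q q"
  shows "G_S n1 n2 n3 n4 m GA GB \<in> carrier_mat q q"
  unfolding G_S_def Let_def assms(1)[symmetric] using assms(2,3) by auto

lemma G_M_carrier:
  assumes "q = net_q n1 n2 n3 n4 m" and "GA \<in> carrier_mat q q" and "GB \<in> carrier_mat q q"
  shows "G_M n1 n2 n3 n4 m GA GB \<in> carrier_mat q q"
  unfolding G_M_def Let_def assms(1)[symmetric] using assms(2,3) by auto

lemma G_S_mult_vec:
  assumes "q = net_q n1 n2 n3 n4 m"
    and "GA \<in> carrier_mat q q" and "GB \<in> carrier_mat q q" and "x \<in> carrier_vec q"
  shows "G_S n1 n2 n3 n4 m GA GB *\<^sub>v x =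
    QP q (q - n3) *\<^sub>v (GA *\<^sub>v (QP q (q - n1) *\<^sub>v x)) + QP q (q - n4) *\<^sub>v (GB *\<^sub>v (QP q (q - n2) *\<^sub>v x))"
  unfolding G_S_def Let_def assms(1)[symmetric] using assms(2-) by (intro add_mult_mat_vec_assoc3) simp_all

lemma G_M_mult_vec:
  assumes "q = net_q n1 n2 n3 n4 m"
    and "GA \<in> carrier_mat q q" and "GB \<in> carrier_mat q q" and "x \<in> carrier_vec q"
  shows "G_M n1 n2 n3 n4 m GA GB *\<^sub>v x =
    QP q (q - n3) *\<^sub>v (GA *\<^sub>v (QP q (q - m) *\<^sub>v x)) + QP q (q - n4) *\<^sub>v (GB *\<^sub>v (QP q (q - m) *\<^sub>v x))"
  unfolding G_M_def Let_def assms(1)[symmetric] using assms(2-) by (intro add_mult_mat_vec_assoc3) simp_all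

lemma G_M_mult_QP_vec:
  assumes "q = net_q n1 n2 n3 n4 m" and "GA \<in> carrier_mat q q" and "GB \<in> carrier_mat q q"
    and "z \<in> carrier_vec q" and "n1 \<le> m"
  shows "G_M n1 n2 n3 n4 m GA GB *\<^sub>v (QP q (m - n1) *\<^sub>v z) =
    QP q (q - n3) *\<^sub>v (GA *\<^sub>v (QP q (q - n1) *\<^sub>v z)) + QP q (q - n4) *\<^sub>v (GB *\<^sub>v (QP q (q - n1) *\<^sub>v z))"
proof -
  have "m \<le> q" using net_q_ge assms(1) by simp
  then have "QP q (q - m) *\<^sub>v (QP q (m - n1) *\<^sub>v z) = QP q (q - n1) *\<^sub>v z"
    using QP_mult_QP_vec[OF assms(4)] \<open>n1 \<le> m\<close> by simp
  then show ?thesis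
    using G_M_mult_vec[OF assms(1-3) mult_mat_vec_carrier[OF QP_carrier assms(4)]] by simp
qed

section \<open>Upper bound\<close>

lemma good_subspace_dim_le:
  assumes good: "good_subspace n1 n2 n3 n4 m GA GB X d" and q: "q = net_q n1 n2 n3 n4 m"
    and A: "A \<in> carrier_mat k q"
    and confusable: "\<And>x y. x \<in> carrier_vec q \<Longrightarrow> y \<in> carrier_vec q \<Longrightarrow> A *\<^sub>v x = A *\<^sub>v y \<Longrightarrow>
      \<exists>xm \<in> carrier_vec q. \<exists>xm' \<in> carrier_vec q.
        G_S n1 n2 n3 n4 m GA GB *\<^sub>v x + G_M n1 n2 n3 n4 m GA GB *\<^sub>v xm =
        G_S n1 n2 n3 n4 m GA GB *\<^sub>v y + G_M n1 n2 n3 n4 m GA GB *\<^sub>v xm'"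
  shows "d \<le> k"
proof -
  have X: "subspace class_ring X (module_vec TYPE(bit) q)"
    and dim: "vectorspace.dim class_ring ((module_vec TYPE(bit) q)\<lparr>carrier := X\<rparr>) = d"
    and decode: "\<And>x y xm xm'. x \<in> X \<Longrightarrow> y \<in> X \<Longrightarrow> xm \<in> carrier_vec q \<Longrightarrow> xm' \<in> carrier_vec q \<Longrightarrow>
      G_S n1 n2 n3 n4 m GA GB *\<^sub>v x + G_M n1 n2 n3 n4 m GA GB *\<^sub>v xm =
      G_S n1 n2 n3 n4 m GA GB *\<^sub>v y + G_M n1 n2 n3 n4 m GA GB *\<^sub>v xm' \<Longrightarrow> x = y"
    using good unfolding good_subspace_def Let_def q[symmetric] by auto
  have "X \<subseteq> carrier_vec q" using X unfolding subspace_def submodule_def by (auto simp: module_vec_simps)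
  have "x = y" if "x \<in> X" "y \<in> X" "A *\<^sub>v x = A *\<^sub>v y" for x y
    using confusable[of x y] decode[of x y] that \<open>X \<subseteq> carrier_vec q\<close> by blast
  then have "inj_on ((*\<^sub>v) A) X" by (rule inj_onI)
  then show ?thesis using subspace_dim_le_of_inj_mat[OF finite_UNIV_bit X A] dim by simp
qed

lemma good_subspace_le_n1:
  assumes "good_subspace n1 n2 n3 n4 m GA GB X d" and q: "q = net_q n1 n2 n3 n4 m"
    and GA: "GA \<in> carrier_mat q q" and GB: "GB \<in> carrier_mat q q" and "n2 \<le> n1"
  shows "d \<le> n1"
proof (rule good_subspace_dim_le[OF assms(1) q trunc_mat_carrier])
  fix x y :: "bit vec"
  assume x: "x \<in> carrier_vec q" and y: "y \<in> carrier_vec q" and eq: "trunc_mat n1 q *\<^sub>v x = trunc_mat n1 q *\<^sub>v y"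
  have agree: "x $ i = y $ i" if "i < n1" for i
    using trunc_mat_mult_vec_eqD[OF eq x y that] net_q_ge(1) q by simp
  have "QP q (q - n1) *\<^sub>v x = QP q (q - n1) *\<^sub>v y" "QP q (q - n2) *\<^sub>v x = QP q (q - n2) *\<^sub>v y"
    using agree \<open>n2 \<le> n1\<close> by (auto intro!: QP_mult_vec_cong[OF x y])
  then have "G_S n1 n2 n3 n4 m GA GB *\<^sub>v x = G_S n1 n2 n3 n4 m GA GB *\<^sub>v y"
    using G_S_mult_vec[OF q GA GB x] G_S_mult_vec[OF q GA GB y] by simp
  then show "\<exists>xm \<in> carrier_vec q. \<exists>xm' \<in> carrier_vec q.
      G_S n1 n2 n3 n4 m GA GB *\<^sub>v x + G_M n1 n2 n3 n4 m GA GB *\<^sub>v xm =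
      G_S n1 n2 n3 n4 m GA GB *\<^sub>v y + G_M n1 n2 n3 n4 m GA GB *\<^sub>v xm'"
    by (intro bexI[of _ "0\<^sub>v q"]) simp_all
qed

lemma bit_add_exchange: "(p :: bit) + r = s + t \<Longrightarrow> a + p + (c + t) = c + s + (a + r)"
  by (cases a; cases c; cases p; cases r; cases s; cases t) simp_all

text \<open>The disturbance imitating the other source signal puts the relay-A contributions of both x and y
  on each side, so only the relay-B contributions have to be compared.\<close>

lemma G_S_add_G_M_swap:
  assumes q: "q = net_q n1 n2 n3 n4 m" and GA: "GA \<in> carrier_mat q q" and GB: "GB \<in> carrier_mat q q"
    and x: "x \<in> carrier_vec q" and y: "y \<in> carrier_vec q" and "n1 \<le> m"
    and B_eq: "QP q (q - n4) *\<^sub>v (GB *\<^sub>v (QP q (q - n2) *\<^sub>v x) + GB *\<^sub>v (QP q (q - n1) *\<^sub>v x)) =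
      QP q (q - n4) *\<^sub>v (GB *\<^sub>v (QP q (q - n2) *\<^sub>v y) + GB *\<^sub>v (QP q (q - n1) *\<^sub>v y))"
  shows "G_S n1 n2 n3 n4 m GA GB *\<^sub>v x + G_M n1 n2 n3 n4 m GA GB *\<^sub>v (QP q (m - n1) *\<^sub>v y) =
    G_S n1 n2 n3 n4 m GA GB *\<^sub>v y + G_M n1 n2 n3 n4 m GA GB *\<^sub>v (QP q (m - n1) *\<^sub>v x)"
    (is "?GS *\<^sub>v x + ?GM *\<^sub>v _ = ?GS *\<^sub>v y + ?GM *\<^sub>v _")
proof (rule eq_vecI)
  let ?Q1 = "QP q (q - n1)" and ?Q2 = "QP q (q - n2)"
  let ?b = "\<lambda>w. QP q (q - n4) *\<^sub>v (GB *\<^sub>v w)"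
  have b_add: "?b (?Q2 *\<^sub>v z) + ?b (?Q1 *\<^sub>v z) = QP q (q - n4) *\<^sub>v (GB *\<^sub>v (?Q2 *\<^sub>v z) + GB *\<^sub>v (?Q1 *\<^sub>v z))"
    if "z \<in> carrier_vec q" for z
    using that by (subst mult_add_distrib_mat_vec[of _ q q])
      (auto intro!: mult_mat_vec_carrier[OF GB] mult_mat_vec_carrier[OF QP_carrier])
  fix i assume "i < dim_vec (?GS *\<^sub>v y + ?GM *\<^sub>v (QP q (m - n1) *\<^sub>v x))"
  then have "i < q" using G_M_carrier[OF q GA GB] by simp
  have "?b (?Q2 *\<^sub>v x) $ i + ?b (?Q1 *\<^sub>v x) $ i = ?b (?Q2 *\<^sub>v y) $ i + ?b (?Q1 *\<^sub>v y) $ i"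
    using arg_cong[OF B_eq, of "\<lambda>v. v $ i"] \<open>i < q\<close> unfolding b_add[OF x, symmetric] b_add[OF y, symmetric]
    by (simp only: index_add_vec dim_mult_mat_vec dim_QP)
  then show "(?GS *\<^sub>v x + ?GM *\<^sub>v (QP q (m - n1) *\<^sub>v y)) $ i = (?GS *\<^sub>v y + ?GM *\<^sub>v (QP q (m - n1) *\<^sub>v x)) $ i"
    unfolding G_S_mult_vec[OF q GA GB x] G_S_mult_vec[OF q GA GB y]
      G_M_mult_QP_vec[OF q GA GB x \<open>n1 \<le> m\<close>] G_M_mult_QP_vec[OF q GA GB y \<open>n1 \<le> m\<close>]
    using \<open>i < q\<close> by (simp only: index_add_vec dim_mult_mat_vec dim_QP) (rule bit_add_exchange)
qed (use G_S_carrier[OF q GA GB] G_M_carrier[OF q GA GB] in simp)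

lemma good_subspace_le_n4:
  assumes "good_subspace n1 n2 n3 n4 m GA GB X d" and q: "q = net_q n1 n2 n3 n4 m"
    and GA: "GA \<in> carrier_mat q q" and GB: "GB \<in> carrier_mat q q" and "n1 \<le> m"
  shows "d \<le> n4"
proof -
  have "n4 \<le> q" using net_q_ge q by simp
  let ?Q1 = "QP q (q - n1)" and ?Q2 = "QP q (q - n2)"
  define u where "u z = GB *\<^sub>v (?Q2 *\<^sub>v z) + GB *\<^sub>v (?Q1 *\<^sub>v z)" for z
  have u: "u z \<in> carrier_vec q" if "z \<in> carrier_vec q" for z
    unfolding u_def using that
    by (auto intro!: add_carrier_vec mult_mat_vec_carrier[OF GB] mult_mat_vec_carrier[OF QP_carrier])
  define A where "A = trunc_mat n4 q * (GB * (?Q2 + ?Q1))"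
  have A: "A \<in> carrier_mat n4 q" unfolding A_def using GB by auto
  have A_mult: "A *\<^sub>v z = trunc_mat n4 q *\<^sub>v u z" if "z \<in> carrier_vec q" for z
    unfolding A_def u_def using GB that
    by (simp add: assoc_mult_mat_vec[of _ n4 q _ q] assoc_mult_mat_vec[of _ q q _ q]
        add_mult_distrib_mat_vec[of _ q q]
        mult_add_distrib_mat_vec[OF GB mult_mat_vec_carrier[OF QP_carrier] mult_mat_vec_carrier[OF QP_carrier]])
  show ?thesis
  proof (rule good_subspace_dim_le[OF assms(1) q A])
    fix x y :: "bit vec"
    assume x: "x \<in> carrier_vec q" and y: "y \<in> carrier_vec q" and "A *\<^sub>v x = A *\<^sub>v y"
    then have "u x $ i = u y $ i" if "i + (q - n4) < q" for i
      using trunc_mat_mult_vec_eqD[of n4 q "u x" "u y" i] A_mult u that \<open>n4 \<le> q\<close> by simp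
    then have "QP q (q - n4) *\<^sub>v u x = QP q (q - n4) *\<^sub>v u y"
      by (rule QP_mult_vec_cong[OF u[OF x] u[OF y]])
    then have "G_S n1 n2 n3 n4 m GA GB *\<^sub>v x + G_M n1 n2 n3 n4 m GA GB *\<^sub>v (QP q (m - n1) *\<^sub>v y) =
        G_S n1 n2 n3 n4 m GA GB *\<^sub>v y + G_M n1 n2 n3 n4 m GA GB *\<^sub>v (QP q (m - n1) *\<^sub>v x)"
      unfolding u_def by (rule G_S_add_G_M_swap[OF q GA GB x y \<open>n1 \<le> m\<close>])
    then show "\<exists>xm \<in> carrier_vec q. \<exists>xm' \<in> carrier_vec q.
        G_S n1 n2 n3 n4 m GA GB *\<^sub>v x + G_M n1 n2 n3 n4 m GA GB *\<^sub>v xm =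
        G_S n1 n2 n3 n4 m GA GB *\<^sub>v y + G_M n1 n2 n3 n4 m GA GB *\<^sub>v xm'"
      using x y mult_mat_vec_carrier[OF QP_carrier] by blast
  qed
qed

section \<open>Achievability\<close>

lemma bit_vec_add_self: "(v :: bit vec) + v = 0\<^sub>v (dim_vec v)"
  by (intro eq_vecI) auto

lemma eq_of_lagged_sum_eq:
  fixes f g :: "nat \<Rightarrow> 'a :: cancel_comm_monoid_add"
  assumes "0 < d"
    and "\<And>j. j < k \<Longrightarrow> f j + (if d \<le> j then f (j - d) else 0) = g j + (if d \<le> j then g (j - d) else 0)"
  shows "j < k \<Longrightarrow> f j = g j"
proof (induction j rule: less_induct)
  case (less j)
  then have "(if d \<le> j then f (j - d) else 0) = (if d \<le> j then g (j - d) else 0)"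
    using \<open>0 < d\<close> by simp
  then show ?case using assms(2)[OF less.prems] by simp
qed

lemma QP_mult_delayed_vec:
  assumes "B \<in> carrier_mat q q" and "w \<in> carrier_vec q" and "n4 \<le> n3" and "n3 \<le> q"
  shows "QP q (q - n3) *\<^sub>v ((QP q (n3 - n4) * B) *\<^sub>v w) = QP q (q - n4) *\<^sub>v (B *\<^sub>v w)"
  using assms QP_mult_QP_vec[OF mult_mat_vec_carrier[OF assms(1,2)], of "q - n3" "n3 - n4"]
  by (simp add: assoc_mult_mat_vec[of _ q q _ q])

lemma G_M_delayed_relay_zero:
  assumes q: "q = net_q n1 n2 n3 n4 m" and GB: "GB \<in> carrier_mat q q"
    and x: "x \<in> carrier_vec q" and "n4 \<le> n3"
  shows "G_M n1 n2 n3 n4 m (QP q (n3 - n4) * GB) GB *\<^sub>v x = 0\<^sub>v q"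
proof -
  have "QP q (n3 - n4) * GB \<in> carrier_mat q q" using GB by (intro mult_carrier_mat[of _ q q]) simp_all
  then show ?thesis
    using G_M_mult_vec[OF q _ GB x] QP_mult_delayed_vec[OF GB mult_mat_vec_carrier[OF QP_carrier x]]
      \<open>n4 \<le> n3\<close> net_q_ge(3) q GB by (simp add: bit_vec_add_self)
qed

lemma G_S_shift_up_entry:
  assumes q: "q = net_q n1 n2 n3 n4 m" and x: "x \<in> carrier_vec q"
    and "n2 < n1" and "n4 \<le> n3" and "j < min n1 n4"
  shows "(G_S n1 n2 n3 n4 m (QP q (n3 - n4) * shift_up q (q - n1)) (shift_up q (q - n1)) *\<^sub>v x) $ (j + (q - n4)) =
    x $ j + (if n1 - n2 \<le> j then x $ (j - (n1 - n2)) else 0)"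
proof -
  have "n1 \<le> q" "n3 \<le> q" "n4 \<le> q" using net_q_ge q by simp_all
  have GA: "QP q (n3 - n4) * shift_up q (q - n1) \<in> carrier_mat q q" by (rule mult_carrier_mat[of _ q q]) simp_all
  have "j + (q - n4) < q" "j + (q - n1) < q" using \<open>j < min n1 n4\<close> \<open>n1 \<le> q\<close> \<open>n4 \<le> q\<close> by linarith+
  moreover have "(q - n2 \<le> j + (q - n1)) = (n1 - n2 \<le> j)" "j + (q - n1) - (q - n2) = j - (n1 - n2)"
    using \<open>n1 \<le> q\<close> \<open>n2 < n1\<close> by auto
  ultimately show ?thesis
    using G_S_mult_vec[OF q GA shift_up_carrier x]
      QP_mult_delayed_vec[OF shift_up_carrier mult_mat_vec_carrier[OF QP_carrier x] \<open>n4 \<le> n3\<close> \<open>n3 \<le> q\<close>] x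
    by (simp add: QP_mult_vec shift_up_mult_vec)
qed

lemma good_subspace_low_vecs:
  assumes q: "q = net_q n1 n2 n3 n4 m" and "n2 < n1" and "n4 \<le> n3"
  shows "good_subspace n1 n2 n3 n4 m (QP q (n3 - n4) * shift_up q (q - n1)) (shift_up q (q - n1))
    (low_vecs q (min n1 n4)) (min n1 n4)"
  unfolding good_subspace_def Let_def q[symmetric]
proof (intro conjI ballI impI)
  let ?k = "min n1 n4"
  let ?GS = "G_S n1 n2 n3 n4 m (QP q (n3 - n4) * shift_up q (q - n1)) (shift_up q (q - n1))"
    and ?GM = "G_M n1 n2 n3 n4 m (QP q (n3 - n4) * shift_up q (q - n1)) (shift_up q (q - n1))"
  show "subspace class_ring (low_vecs q ?k) (module_vec TYPE(bit) q)" by (rule low_vecs_subspace)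
  show "vectorspace.dim class_ring ((module_vec TYPE(bit) q)\<lparr>carrier := low_vecs q ?k\<rparr>) = ?k"
    using net_q_ge q by (intro low_vecs_dim finite_UNIV_bit) (simp add: min_le_iff_disj)
  fix x x' xm xm'
  assume x: "x \<in> low_vecs q ?k" and x': "x' \<in> low_vecs q ?k"
    and "xm \<in> carrier_vec q" "xm' \<in> carrier_vec q" and "?GS *\<^sub>v x + ?GM *\<^sub>v xm = ?GS *\<^sub>v x' + ?GM *\<^sub>v xm'"
  moreover have xc: "x \<in> carrier_vec q" and x'c: "x' \<in> carrier_vec q" using x x' by (simp_all add: low_vecs_def)
  moreover have "?GS \<in> carrier_mat q q" by (intro G_S_carrier[OF q] mult_carrier_mat[of _ q q]) simp_all
  ultimately have GS_eq: "?GS *\<^sub>v x = ?GS *\<^sub>v x'"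
    using G_M_delayed_relay_zero[OF q shift_up_carrier _ \<open>n4 \<le> n3\<close>] by simp
  have lagged: "x $ j + (if n1 - n2 \<le> j then x $ (j - (n1 - n2)) else 0) =
      x' $ j + (if n1 - n2 \<le> j then x' $ (j - (n1 - n2)) else 0)" if "j < ?k" for j
    using arg_cong[OF GS_eq, of "\<lambda>v. v $ (j + (q - n4))"]
    unfolding G_S_shift_up_entry[OF q xc assms(2,3) that] G_S_shift_up_entry[OF q x'c assms(2,3) that] .
  have low_agree: "x $ j = x' $ j" if "j < ?k" for j
    using eq_of_lagged_sum_eq[of "n1 - n2" ?k "($) x" "($) x'", OF _ lagged that] \<open>n2 < n1\<close> by simp
  have "x $ i = x' $ i" if "i < q" for i
  proof (cases "i < ?k")
    case False
    then have "?k \<le> i" by (simp only: not_less)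
    then show ?thesis using x x' that unfolding low_vecs_def by simp
  qed (rule low_agree)
  then show "x = x'" using xc x'c by (intro eq_vecI) auto
qed

lemma good_subspace_zero:
  assumes q: "q = net_q n1 n2 n3 n4 m"
  shows "good_subspace n1 n2 n3 n4 m GA GB (low_vecs q 0) 0"
  unfolding good_subspace_def Let_def q[symmetric]
proof (intro conjI ballI impI)
  show "subspace class_ring (low_vecs q 0) (module_vec TYPE(bit) q)" by (rule low_vecs_subspace)
  show "vectorspace.dim class_ring ((module_vec TYPE(bit) q)\<lparr>carrier := low_vecs q 0\<rparr>) = 0"
    by (intro low_vecs_dim finite_UNIV_bit) simp
  fix x x' :: "bit vec" assume "x \<in> low_vecs q 0" "x' \<in> low_vecs q 0"
  then show "x = x'" unfolding low_vecs_def by (auto intro!: eq_vecI)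
qed

lemma Max_nat_eqI:
  fixes A :: "nat set"
  assumes "\<And>y. y \<in> A \<Longrightarrow> y \<le> x" and "x \<in> A"
  shows "Max A = x"
  using assms by (intro Max_eqI) (auto simp: finite_nat_set_iff_bounded_le)

lemma rate_le:
  assumes "q = net_q n1 n2 n3 n4 m" and "\<And>X d. good_subspace n1 n2 n3 n4 m GA GB X d \<Longrightarrow> d \<le> r"
  shows "rate n1 n2 n3 n4 m GA GB \<le> r"
  unfolding rate_def using assms(2) good_subspace_zero[OF assms(1), of GA GB]
  by (intro Max.boundedI) (auto simp: finite_nat_set_iff_bounded_le)

lemma rate_eqI:
  assumes "\<And>X d. good_subspace n1 n2 n3 n4 m GA GB X d \<Longrightarrow> d \<le> r"
    and "good_subspace n1 n2 n3 n4 m GA GB X r"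
  shows "rate n1 n2 n3 n4 m GA GB = r"
  unfolding rate_def using assms by (intro Max_nat_eqI) auto

theorem mainTheorem5:
  fixes n1 n2 n3 n4 m :: nat
  assumes "n1 > n2" and "n3 \<ge> n4" and "m \<ge> n1"
  shows "linear_capacity n1 n2 n3 n4 m = min n1 n4"
proof -
  define q where "q = net_q n1 n2 n3 n4 m"
  have upper_bound: "d \<le> min n1 n4" if "GA \<in> carrier_mat q q" "GB \<in> carrier_mat q q"
    and "good_subspace n1 n2 n3 n4 m GA GB X d" for GA GB X d
    using good_subspace_le_n1[OF that(3) q_def that(1,2)] good_subspace_le_n4[OF that(3) q_def that(1,2)] assms
    by simp
  define GA where "GA = QP q (n3 - n4) * shift_up q (q - n1)"
  define GB where "GB = shift_up q (q - n1)"
  have relays: "GA \<in> carrier_mat q q" "GB \<in> carrier_mat q q"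
    unfolding GA_def GB_def by (auto intro: mult_carrier_mat[of _ q q])
  have "rate n1 n2 n3 n4 m GA GB = min n1 n4"
    using upper_bound[OF relays] good_subspace_low_vecs[OF q_def assms(1,2)] unfolding GA_def GB_def
    by (intro rate_eqI)
  moreover have "rate n1 n2 n3 n4 m GA' GB' \<le> min n1 n4"
    if "GA' \<in> carrier_mat q q" "GB' \<in> carrier_mat q q" for GA' GB'
    using upper_bound[OF that] by (rule rate_le[OF q_def])
  ultimately show ?thesis
    unfolding linear_capacity_def Let_def q_def[symmetric] using relays
    by (intro Max_nat_eqI) (blast, force)
qed

end
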